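(* Let $\Phi$ be a Young function and let $\varphi\in\mathcal{G}^{\rm dec}_1$. Let $\psi:\mathbb{R}^n\to\mathbb{R}^n$ be a measurable nonsingular transformation. Assume that $\psi$ is Lipschitz with constant $L>0$, i.e. $|\psi(x)-\psi(y)|\le L|x-y|$ for all $x,y\in\mathbb{R}^n$, and that there is a constant $K>0$ such that $|\psi^{-1}(A)|\le K|A|$ for all measurable sets $A\subset\mathbb{R}^n$. Then $C_\psi$ is bounded on $\mathcal{M}_\Phi^\varphi(\mathbb{R}^n)$; more precisely, there exist constants $C_1,C_2>0$ such that \[ \|C_\psi f\|_{\mathcal{M}_\Phi^\varphi}\le K\bigl(C_1+C_2\varphi(L)L^n\bigr)\|f\|_{\mathcal{M}_\Phi^\varphi}\quad\text{for all } f\in\mathcal{M}_\Phi^\varphi(\mathbb{R}^n). \]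
   Context: A Young function is a convex function $\Phi:[0,\infty)\to[0,\infty)$ with $\Phi(0)=0$ and $\lim_{t\to\infty}\Phi(t)=\infty$. A function $\varphi:(0,\infty)\to(0,\infty)$ is almost decreasing if there is $C>0$ with $C\varphi(r)\ge\varphi(s)$ whenever $0<r<s$; it is submultiplicative if there is $C>0$ with $\varphi(rs)\le C\varphi(r)\varphi(s)$ for all $r,s>0$. $\mathcal{G}^{\rm dec}_1$ denotes the set of almost decreasing submultiplicative functions $\varphi:(0,\infty)\to(0,\infty)$. A measurable map $\psi$ is nonsingular if $|\psi^{-1}(A)|=0$ whenever $|A|=0$; $C_\psi f=f\circ\psi$. For a ball $B=B(a,r)$ (open ball of center $a$, radius $r$), $\|f\|_{\Phi,B}=\inf\{\lambda>0:\frac1{|B|}\int_B\Phi(|f(x)|/\lambda)\,dx\le1\}$, and $\mathcal{M}_\Phi^\varphi(\mathbb{R}^n)$ is the set of measurable $f$ with $\|f\|_{\mathcal{M}_\Phi^\varphi}=\sup_{a\in\mathbb{R}^n,r>0}\frac1{\varphi(r)}\|f\|_{\Phi,B(a,r)}<\infty$ (Orlicz–Morrey space). *)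

theory Defs
  imports "HOL-Analysis.Analysis"
begin

definition young_function :: "(real \<Rightarrow> real) \<Rightarrow> bool" where
  "young_function \<Phi> \<longleftrightarrow> convex_on {0..} \<Phi> \<and> \<Phi> 0 = 0 \<and>
     (\<forall>t\<ge>0. \<Phi> t \<ge> 0) \<and> filterlim \<Phi> at_top at_top"

definition almost_decreasing :: "(real \<Rightarrow> real) \<Rightarrow> bool" where
  "almost_decreasing \<phi> \<longleftrightarrow> (\<exists>C>0. \<forall>r s. 0 < r \<and> r < s \<longrightarrow> \<phi> s \<le> C * \<phi> r)"

definition submultiplicative :: "(real \<Rightarrow> real) \<Rightarrow> bool" where
  "submultiplicative \<phi> \<longleftrightarrow> (\<exists>C>0. \<forall>r>0. \<forall>s>0. \<phi> (r * s) \<le> C * \<phi> r * \<phi> s)"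

definition G_dec_1 :: "(real \<Rightarrow> real) set" where
  "G_dec_1 = {\<phi>. (\<forall>r>0. \<phi> r > 0) \<and> almost_decreasing \<phi> \<and> submultiplicative \<phi>}"

definition nonsingular :: "('a::euclidean_space \<Rightarrow> 'a) \<Rightarrow> bool" where
  "nonsingular \<psi> \<longleftrightarrow> (\<forall>A \<in> sets lebesgue. emeasure lebesgue A = 0 \<longrightarrow> emeasure lebesgue (\<psi> -` A) = 0)"

text \<open>Luxemburg norm on a ball; Inf of the empty set is infinity in ennreal.\<close>
definition orlicz_ball_norm :: "(real \<Rightarrow> real) \<Rightarrow> ('a::euclidean_space \<Rightarrow> real) \<Rightarrow> 'a set \<Rightarrow> ennreal" where
  "orlicz_ball_norm \<Phi> f B = Inf {ennreal t | t. t > 0 \<and>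
      (\<integral>\<^sup>+ x \<in> B. ennreal (\<Phi> (\<bar>f x\<bar> / t)) \<partial>lebesgue) \<le> emeasure lebesgue B}"

definition orlicz_morrey_norm :: "(real \<Rightarrow> real) \<Rightarrow> (real \<Rightarrow> real) \<Rightarrow> ('a::euclidean_space \<Rightarrow> real) \<Rightarrow> ennreal" where
  "orlicz_morrey_norm \<Phi> \<phi> f = (SUP ar \<in> UNIV \<times> {0<..}.
      ennreal (1 / \<phi> (snd ar)) * orlicz_ball_norm \<Phi> f (ball (fst ar) (snd ar)))"

definition orlicz_morrey_space :: "(real \<Rightarrow> real) \<Rightarrow> (real \<Rightarrow> real) \<Rightarrow> ('a::euclidean_space \<Rightarrow> real) set" where
  "orlicz_morrey_space \<Phi> \<phi> = {f. f \<in> borel_measurable lebesgue \<and> orlicz_morrey_norm \<Phi> \<phi> f < \<infinity>}"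

end

theory Submission
  imports Defs
begin

(* Let B = ball a r and B' = ball (psi a) (L r), so that psi maps B into B' and |B'| = L^n |B|.
   Put c = K L^n; comparing the unit ball with the preimage of ball (psi 0) L shows c >= 1.
   Convexity of Phi (with Phi 0 = 0) and the preimage bound then give, whenever t is admissible
   for f on B',
     int_B Phi(|f o psi| / (c t)) <= (1/c) int (Phi(|f| / t) 1_B') o psi
                                  <= (K/c) int_B' Phi(|f| / t) <= (K/c) |B'| = |B|,
   so the Luxemburg norms satisfy ||f o psi||_B <= c ||f||_B' <= c phi(L r) ||f||_Morrey.
   Submultiplicativity, phi(L r) <= C phi(L) phi(r), turns this into the Morrey bound
   c C phi(L) ||f||_Morrey, which is at most K (1 + C phi(L) L^n) ||f||_Morrey. *)

lemma ennreal_cmult_Inf: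
  fixes S :: "ennreal set" and c :: real
  assumes "S \<noteq> {}"
  shows "ennreal c * Inf S = Inf ((*) (ennreal c) ` S)"
proof (rule continuous_at_Inf_mono)
  show "mono ((*) (ennreal c))"
    by (simp add: mono_def mult_left_mono)
  have "continuous_on UNIV ((*) (ennreal c))"
    using ennreal_continuous_on_cmult[of "ennreal c" UNIV id] by (simp add: id_def)
  then show "continuous (at_right (Inf S)) ((*) (ennreal c))"
    by (simp add: continuous_on_eq_continuous_within continuous_at_imp_continuous_at_within)
  show "bdd_below S"
    by simp
qed (fact assms)

lemma emeasure_lebesgue_ball_pos:
  assumes "r > 0"
  shows "0 < emeasure lebesgue (ball a r)"
proof -
  have "emeasure lebesgue (ball a r) = ennreal (measure lebesgue (ball a r))"
    using emeasure_eq_ennreal_measure by (metis fmeasurableD2 lmeasurable_ball)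
  moreover have "0 < measure lebesgue (ball a r)"
    using content_ball_pos[OF assms] by simp
  ultimately show ?thesis by simp
qed

lemma emeasure_lebesgue_ball_scale:
  fixes a b :: "'a::euclidean_space"
  assumes "0 \<le> s" and "0 \<le> r"
  shows "emeasure lebesgue (ball b (s * r)) =
           ennreal (s ^ DIM('a)) * emeasure lebesgue (ball a r)"
proof -
  let ?U = "emeasure lebesgue (ball (0::'a) 1)"
  have "emeasure lebesgue (ball b (s * r)) = ennreal ((s * r) ^ DIM('a)) * ?U"
    by (rule emeasure_lebesgue_ball_conv_unit_ball) (use assms in simp)
  also have "\<dots> = ennreal (s ^ DIM('a)) * (ennreal (r ^ DIM('a)) * ?U)"
    using assms by (simp only: power_mult_distrib ennreal_mult zero_le_power mult.assoc)
  also have "ennreal (r ^ DIM('a)) * ?U = emeasure lebesgue (ball a r)"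
    using assms by (intro emeasure_lebesgue_ball_conv_unit_ball[symmetric])
  finally show ?thesis .
qed

lemma nn_integral_comp_le_cmult:
  assumes \<psi>: "\<psi> \<in> M \<rightarrow>\<^sub>M N" and g: "g \<in> borel_measurable N"
    and bound: "\<And>A. A \<in> sets N \<Longrightarrow> emeasure M (\<psi> -` A \<inter> space M) \<le> K * emeasure N A"
  shows "(\<integral>\<^sup>+ x. g (\<psi> x) \<partial>M) \<le> K * (\<integral>\<^sup>+ y. g y \<partial>N)"
proof -
  have "emeasure (distr M N \<psi>) A \<le> emeasure (scale_measure K N) A" for A
    by (cases "A \<in> sets N") (simp_all add: emeasure_distr[OF \<psi>] bound emeasure_notin_sets)
  then have "distr M N \<psi> \<le> scale_measure K N"
    by (simp add: le_measure_iff le_fun_def space_scale_measure)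
  then have "(\<integral>\<^sup>+ y. g y \<partial>distr M N \<psi>) \<le> (\<integral>\<^sup>+ y. g y \<partial>scale_measure K N)"
    by (intro nn_integral_mono_measure) simp_all
  moreover have "(\<integral>\<^sup>+ y. g y \<partial>distr M N \<psi>) = (\<integral>\<^sup>+ x. g (\<psi> x) \<partial>M)"
    by (rule nn_integral_distr[OF \<psi>]) (use g in simp)
  ultimately show ?thesis
    using nn_integral_scale_measure[OF g] by simp
qed

lemma young_function_scale_le:
  assumes "young_function \<Phi>" and "0 \<le> \<theta>" "\<theta> \<le> 1" "0 \<le> s"
  shows "\<Phi> (\<theta> * s) \<le> \<theta> * \<Phi> s"
proof -
  have "convex_on {0..} \<Phi>" and "\<Phi> 0 = 0"
    using assms(1) unfolding young_function_def by blast+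
  moreover from this have "\<Phi> ((1 - \<theta>) *\<^sub>R 0 + \<theta> *\<^sub>R s) \<le> (1 - \<theta>) * \<Phi> 0 + \<theta> * \<Phi> s"
    by (intro convex_onD) (use assms in auto)
  ultimately show ?thesis by simp
qed

lemma young_function_mono:
  assumes "young_function \<Phi>" and "0 \<le> a" "a \<le> b"
  shows "\<Phi> a \<le> \<Phi> b"
proof (cases "b = 0")
  case False
  then have "b > 0" using assms by simp
  have "\<Phi> ((a / b) * b) \<le> (a / b) * \<Phi> b"
    by (rule young_function_scale_le) (use assms \<open>b > 0\<close> in auto)
  also have "\<dots> \<le> \<Phi> b"
    using assms \<open>b > 0\<close> unfolding young_function_def by (intro mult_left_le_one_le) auto
  finally show ?thesis using \<open>b > 0\<close> by simp
qed (use assms in simp)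

lemma borel_measurable_young_function:
  assumes "young_function \<Phi>" and "g \<in> borel_measurable M" and "\<And>x. 0 \<le> g x"
  shows "(\<lambda>x. \<Phi> (g x)) \<in> borel_measurable M"
proof -
  have "mono (\<lambda>s. \<Phi> (max 0 s))"
    by (intro monoI young_function_mono[OF assms(1)]) auto
  then have "(\<lambda>s. \<Phi> (max 0 s)) \<in> borel_measurable borel"
    by (rule borel_measurable_mono)
  from measurable_compose[OF assms(2) this] show ?thesis
    using assms(3) by (simp add: max_absorb2)
qed

lemma orlicz_ball_norm_le_cmult:
  assumes "c > 0"
    and modular: "\<And>t. t > 0 \<Longrightarrow>
      (\<integral>\<^sup>+ x \<in> B. ennreal (\<Phi> (\<bar>g x\<bar> / t)) \<partial>lebesgue) \<le> emeasure lebesgue B \<Longrightarrow>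
      (\<integral>\<^sup>+ x \<in> A. ennreal (\<Phi> (\<bar>f x\<bar> / (c * t))) \<partial>lebesgue) \<le> emeasure lebesgue A"
  shows "orlicz_ball_norm \<Phi> f A \<le> ennreal c * orlicz_ball_norm \<Phi> g B"
proof -
  define S where "S = {ennreal t | t. t > 0 \<and>
      (\<integral>\<^sup>+ x \<in> B. ennreal (\<Phi> (\<bar>g x\<bar> / t)) \<partial>lebesgue) \<le> emeasure lebesgue B}"
  show ?thesis
  proof (cases "S = {}")
    case True
    then show ?thesis
      using \<open>c > 0\<close> by (simp add: orlicz_ball_norm_def S_def[symmetric] ennreal_mult_top)
  next
    case False
    have "orlicz_ball_norm \<Phi> f A \<le> Inf ((*) (ennreal c) ` S)"
      unfolding orlicz_ball_norm_def
    proof (rule Inf_mono)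
      fix y assume "y \<in> (*) (ennreal c) ` S"
      then obtain t where "t > 0" "y = ennreal (c * t)"
        and "(\<integral>\<^sup>+ x \<in> B. ennreal (\<Phi> (\<bar>g x\<bar> / t)) \<partial>lebesgue) \<le> emeasure lebesgue B"
        using \<open>c > 0\<close> by (auto simp: S_def ennreal_mult)
      with modular \<open>c > 0\<close> show "\<exists>x \<in> {ennreal t | t. t > 0 \<and>
          (\<integral>\<^sup>+ x \<in> A. ennreal (\<Phi> (\<bar>f x\<bar> / t)) \<partial>lebesgue) \<le> emeasure lebesgue A}. x \<le> y"
        by fastforce
    qed
    also have "\<dots> = ennreal c * orlicz_ball_norm \<Phi> g B"
      using ennreal_cmult_Inf[OF False] by (simp add: orlicz_ball_norm_def S_def)
    finally show ?thesis .
  qed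
qed

lemma orlicz_ball_norm_le_morrey_norm:
  assumes "0 < r" and "0 < \<phi> r"
  shows "orlicz_ball_norm \<Phi> f (ball a r) \<le> ennreal (\<phi> r) * orlicz_morrey_norm \<Phi> \<phi> f"
proof -
  have "ennreal (1 / \<phi> r) * orlicz_ball_norm \<Phi> f (ball a r) \<le> orlicz_morrey_norm \<Phi> \<phi> f"
    unfolding orlicz_morrey_norm_def by (rule SUP_upper2[of "(a, r)"]) (use assms in auto)
  then have "ennreal (\<phi> r) * (ennreal (1 / \<phi> r) * orlicz_ball_norm \<Phi> f (ball a r))
      \<le> ennreal (\<phi> r) * orlicz_morrey_norm \<Phi> \<phi> f"
    by (rule mult_left_mono) simp
  moreover have "ennreal (\<phi> r) * ennreal (1 / \<phi> r) = 1"
    using assms by (simp flip: ennreal_mult)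
  ultimately show ?thesis
    by (simp add: mult.assoc[symmetric])
qed

lemma orlicz_morrey_norm_leI:
  assumes "\<And>r. 0 < r \<Longrightarrow> 0 < \<phi> r"
    and "\<And>a r. 0 < r \<Longrightarrow> orlicz_ball_norm \<Phi> f (ball a r) \<le> ennreal (\<phi> r) * M"
  shows "orlicz_morrey_norm \<Phi> \<phi> f \<le> M"
  unfolding orlicz_morrey_norm_def
proof (rule SUP_least, clarsimp)
  fix a and r :: real
  assume "0 < r"
  have "ennreal (1 / \<phi> r) * orlicz_ball_norm \<Phi> f (ball a r)
      \<le> ennreal (1 / \<phi> r) * (ennreal (\<phi> r) * M)"
    using assms(2)[OF \<open>0 < r\<close>] by (rule mult_left_mono) simp
  also have "\<dots> = M"
    using assms(1)[OF \<open>0 < r\<close>] by (simp add: mult.assoc[symmetric] flip: ennreal_mult)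
  finally show "ennreal (1 / \<phi> r) * orlicz_ball_norm \<Phi> f (ball a r) \<le> M" .
qed

context
  fixes \<psi> :: "'a::euclidean_space \<Rightarrow> 'a" and L K :: real
  assumes psi_measurable: "\<psi> \<in> lebesgue \<rightarrow>\<^sub>M lebesgue"
    and lipschitz: "\<And>x y. dist (\<psi> x) (\<psi> y) \<le> L * dist x y"
    and preimage_bound:
      "\<And>A. A \<in> sets lebesgue \<Longrightarrow> emeasure lebesgue (\<psi> -` A) \<le> ennreal K * emeasure lebesgue A"
    and L_pos: "0 < L" and K_pos: "0 < K"
begin

lemma ball_subset_vimage_ball: "ball a r \<subseteq> \<psi> -` ball (\<psi> a) (L * r)"
proof
  fix x assume "x \<in> ball a r"
  then have "L * dist a x < L * r"
    using L_pos by simp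
  then show "x \<in> \<psi> -` ball (\<psi> a) (L * r)"
    using lipschitz[of a x] by simp
qed

lemma one_le_preimage_bound: "1 \<le> K * L ^ DIM('a)"
proof -
  let ?U = "emeasure lebesgue (ball (0::'a) 1)"
  have "\<psi> -` ball (\<psi> 0) (L * 1) \<in> sets lebesgue"
    using measurable_sets[OF psi_measurable, of "ball (\<psi> 0) (L * 1)"] by simp
  then have "?U \<le> emeasure lebesgue (\<psi> -` ball (\<psi> 0) (L * 1))"
    by (intro emeasure_mono ball_subset_vimage_ball)
  also have "\<dots> \<le> ennreal K * emeasure lebesgue (ball (\<psi> 0) (L * 1))"
    by (rule preimage_bound) simp
  also have "emeasure lebesgue (ball (\<psi> 0) (L * 1)) = ennreal (L ^ DIM('a)) * ?U"
    by (rule emeasure_lebesgue_ball_scale) (use L_pos in auto)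
  also have "ennreal K * (ennreal (L ^ DIM('a)) * ?U) = ennreal (K * L ^ DIM('a)) * ?U"
    using L_pos K_pos by (simp add: ennreal_mult mult.assoc)
  finally have "?U * 1 \<le> ?U * ennreal (K * L ^ DIM('a))"
    by (simp add: mult.commute)
  moreover have "?U \<noteq> 0"
    using emeasure_lebesgue_ball_pos[of 1 "0::'a"] by simp
  moreover have "?U \<noteq> \<infinity>"
    by (metis fmeasurableD2 infinity_ennreal_def lmeasurable_ball)
  ultimately have "1 \<le> ennreal (K * L ^ DIM('a))"
    by (metis ennreal_mult_le_mult_iff infinity_ennreal_def)
  then show ?thesis
    by simp
qed

lemma orlicz_modular_comp_le:
  assumes Y: "young_function \<Phi>" and f: "f \<in> borel_measurable lebesgue"
    and "0 \<le> r" and "0 < t"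
    and modular: "(\<integral>\<^sup>+ y \<in> ball (\<psi> a) (L * r). ennreal (\<Phi> (\<bar>f y\<bar> / t)) \<partial>lebesgue)
                   \<le> emeasure lebesgue (ball (\<psi> a) (L * r))"
  shows "(\<integral>\<^sup>+ x \<in> ball a r. ennreal (\<Phi> (\<bar>(f \<circ> \<psi>) x\<bar> / (K * L ^ DIM('a) * t))) \<partial>lebesgue)
          \<le> emeasure lebesgue (ball a r)"
proof -
  define c where "c = K * L ^ DIM('a)"
  define B where "B = ball (\<psi> a) (L * r)"
  define g where "g y = ennreal (\<Phi> (\<bar>f y\<bar> / t)) * indicator B y" for y
  \<comment> \<open>\<open>1 \<le> c\<close> makes \<open>1 / c\<close> an admissible weight in the convexity estimate.\<close>
  have "1 \<le> c"
    using one_le_preimage_bound by (simp add: c_def)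
  have "(\<lambda>y. \<Phi> (\<bar>f y\<bar> / t)) \<in> borel_measurable lebesgue"
    by (rule borel_measurable_young_function[OF Y]) (use f \<open>0 < t\<close> in auto)
  then have g_measurable: "g \<in> borel_measurable lebesgue"
    unfolding g_def B_def
    by (intro borel_measurable_times_ennreal borel_measurable_indicator
              measurable_compose[OF _ measurable_ennreal]) simp_all
  have pointwise: "ennreal (\<Phi> (\<bar>(f \<circ> \<psi>) x\<bar> / (c * t))) * indicator (ball a r) x
      \<le> ennreal (1 / c) * g (\<psi> x)" for x
  proof (cases "x \<in> ball a r")
    case True
    then have "\<psi> x \<in> B"
      using ball_subset_vimage_ball[of a r] unfolding B_def by blast
    have "\<Phi> (\<bar>(f \<circ> \<psi>) x\<bar> / (c * t)) \<le> (1 / c) * \<Phi> (\<bar>f (\<psi> x)\<bar> / t)"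
      using young_function_scale_le[OF Y, of "1 / c" "\<bar>f (\<psi> x)\<bar> / t"] \<open>1 \<le> c\<close> \<open>0 < t\<close>
      by simp
    then have "ennreal (\<Phi> (\<bar>(f \<circ> \<psi>) x\<bar> / (c * t))) \<le> ennreal (1 / c) * ennreal (\<Phi> (\<bar>f (\<psi> x)\<bar> / t))"
      using \<open>1 \<le> c\<close> by (simp add: ennreal_leI flip: ennreal_mult')
    then show ?thesis
      using True \<open>\<psi> x \<in> B\<close> by (simp add: g_def)
  qed simp
  have "(\<integral>\<^sup>+ x \<in> ball a r. ennreal (\<Phi> (\<bar>(f \<circ> \<psi>) x\<bar> / (c * t))) \<partial>lebesgue)
      \<le> (\<integral>\<^sup>+ x. ennreal (1 / c) * g (\<psi> x) \<partial>lebesgue)"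
    by (intro nn_integral_mono pointwise)
  also have "\<dots> = ennreal (1 / c) * (\<integral>\<^sup>+ x. g (\<psi> x) \<partial>lebesgue)"
    using measurable_compose[OF psi_measurable g_measurable] by (intro nn_integral_cmult) simp
  also have "\<dots> \<le> ennreal (1 / c) * (ennreal K * (\<integral>\<^sup>+ y. g y \<partial>lebesgue))"
    by (intro mult_left_mono nn_integral_comp_le_cmult[OF psi_measurable g_measurable])
       (use preimage_bound in \<open>simp_all only: space_completion space_lborel space_borel Int_UNIV_right zero_le\<close>)
  also have "\<dots> \<le> ennreal (1 / c) * (ennreal K * emeasure lebesgue B)"
    using modular by (intro mult_left_mono) (simp_all add: g_def B_def)
  also have "emeasure lebesgue B = ennreal (L ^ DIM('a)) * emeasure lebesgue (ball a r)"
    unfolding B_def by (rule emeasure_lebesgue_ball_scale) (use \<open>0 \<le> r\<close> L_pos in auto)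
  also have "ennreal (1 / c) * (ennreal K * (ennreal (L ^ DIM('a)) * emeasure lebesgue (ball a r)))
      = emeasure lebesgue (ball a r)"
  proof -
    have "ennreal (1 / c) * (ennreal K * ennreal (L ^ DIM('a))) = 1"
      using \<open>1 \<le> c\<close> L_pos K_pos by (simp add: c_def flip: ennreal_mult)
    then show ?thesis
      by (metis mult.assoc mult_1)
  qed
  finally show ?thesis
    by (simp add: c_def)
qed

lemma orlicz_ball_norm_comp_le:
  assumes "young_function \<Phi>" and "f \<in> borel_measurable lebesgue" and "0 \<le> r"
  shows "orlicz_ball_norm \<Phi> (f \<circ> \<psi>) (ball a r)
           \<le> ennreal (K * L ^ DIM('a)) * orlicz_ball_norm \<Phi> f (ball (\<psi> a) (L * r))"
  using one_le_preimage_bound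
  by (intro orlicz_ball_norm_le_cmult orlicz_modular_comp_le[OF assms]) auto

lemma orlicz_morrey_norm_comp_le:
  assumes Y: "young_function \<Phi>" and f: "f \<in> borel_measurable lebesgue"
    and \<phi>_pos: "\<And>r. 0 < r \<Longrightarrow> 0 < \<phi> r"
    and \<phi>_submult: "\<And>r s. 0 < r \<Longrightarrow> 0 < s \<Longrightarrow> \<phi> (r * s) \<le> C * \<phi> r * \<phi> s"
    and "0 < C"
  shows "orlicz_morrey_norm \<Phi> \<phi> (f \<circ> \<psi>)
           \<le> ennreal (K * L ^ DIM('a) * C * \<phi> L) * orlicz_morrey_norm \<Phi> \<phi> f"
proof (rule orlicz_morrey_norm_leI[OF \<phi>_pos])
  fix a and r :: real
  assume "0 < r"
  define c where "c = K * L ^ DIM('a)"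
  have "0 \<le> c" and "0 < \<phi> r" and "0 < \<phi> L"
    using K_pos L_pos \<open>0 < r\<close> \<phi>_pos by (auto simp: c_def)
  have "orlicz_ball_norm \<Phi> (f \<circ> \<psi>) (ball a r) \<le> ennreal c * orlicz_ball_norm \<Phi> f (ball (\<psi> a) (L * r))"
    using orlicz_ball_norm_comp_le[OF Y f] \<open>0 < r\<close> by (simp add: c_def)
  also have "\<dots> \<le> ennreal c * (ennreal (\<phi> (L * r)) * orlicz_morrey_norm \<Phi> \<phi> f)"
    using L_pos \<open>0 < r\<close> \<phi>_pos
    by (intro mult_left_mono orlicz_ball_norm_le_morrey_norm) simp_all
  also have "\<dots> = ennreal (c * \<phi> (L * r)) * orlicz_morrey_norm \<Phi> \<phi> f"
    using \<open>0 \<le> c\<close> \<phi>_pos[of "L * r"] L_pos \<open>0 < r\<close> by (simp add: ennreal_mult mult.assoc)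
  also have "\<dots> \<le> ennreal (\<phi> r * (c * C * \<phi> L)) * orlicz_morrey_norm \<Phi> \<phi> f"
  proof (intro mult_right_mono ennreal_leI)
    show "c * \<phi> (L * r) \<le> \<phi> r * (c * C * \<phi> L)"
      using mult_left_mono[OF \<phi>_submult[OF L_pos \<open>0 < r\<close>] \<open>0 \<le> c\<close>] by (simp add: ac_simps)
  qed simp
  also have "\<dots> = ennreal (\<phi> r) * (ennreal (c * C * \<phi> L) * orlicz_morrey_norm \<Phi> \<phi> f)"
    using \<open>0 < \<phi> r\<close> \<open>0 < \<phi> L\<close> \<open>0 \<le> c\<close> \<open>0 < C\<close> by (simp add: ennreal_mult mult.assoc)
  finally show "orlicz_ball_norm \<Phi> (f \<circ> \<psi>) (ball a r)
      \<le> ennreal (\<phi> r) * (ennreal (K * L ^ DIM('a) * C * \<phi> L) * orlicz_morrey_norm \<Phi> \<phi> f)"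
    by (simp add: c_def)
qed

end

theorem theorem1p7:
  fixes \<Phi> \<phi> :: "real \<Rightarrow> real"
  assumes "young_function \<Phi>" and "\<phi> \<in> G_dec_1"
  shows "\<exists>C1>0. \<exists>C2>0. \<forall>(\<psi>::'a::euclidean_space \<Rightarrow> 'a) (L::real) (K::real).
     \<psi> \<in> lebesgue \<rightarrow>\<^sub>M lebesgue \<and> nonsingular \<psi> \<and> L > 0 \<and> K > 0 \<and>
     (\<forall>x y. dist (\<psi> x) (\<psi> y) \<le> L * dist x y) \<and>
     (\<forall>A \<in> sets lebesgue. emeasure lebesgue (\<psi> -` A) \<le> ennreal K * emeasure lebesgue A)
     \<longrightarrow> (\<forall>f \<in> orlicz_morrey_space \<Phi> \<phi>.
            f \<circ> \<psi> \<in> orlicz_morrey_space \<Phi> \<phi> \<and>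
            orlicz_morrey_norm \<Phi> \<phi> (f \<circ> \<psi>)
              \<le> ennreal (K * (C1 + C2 * \<phi> L * L ^ DIM('a))) * orlicz_morrey_norm \<Phi> \<phi> f)"
proof -
  obtain C where "0 < C" and submult: "\<And>r s. 0 < r \<Longrightarrow> 0 < s \<Longrightarrow> \<phi> (r * s) \<le> C * \<phi> r * \<phi> s"
    using assms(2) by (auto simp: G_dec_1_def submultiplicative_def)
  have \<phi>_pos: "\<And>r. 0 < r \<Longrightarrow> 0 < \<phi> r"
    using assms(2) by (auto simp: G_dec_1_def)
  have "f \<circ> \<psi> \<in> orlicz_morrey_space \<Phi> \<phi> \<and>
      orlicz_morrey_norm \<Phi> \<phi> (f \<circ> \<psi>) \<le> ennreal (K * (1 + C * \<phi> L * L ^ DIM('a))) * orlicz_morrey_norm \<Phi> \<phi> f"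
    if \<psi>: "\<psi> \<in> lebesgue \<rightarrow>\<^sub>M lebesgue" "0 < L" "0 < K" "\<forall>x y. dist (\<psi> x) (\<psi> y) \<le> L * dist x y"
      "\<forall>A \<in> sets lebesgue. emeasure lebesgue (\<psi> -` A) \<le> ennreal K * emeasure lebesgue A"
      and f: "f \<in> orlicz_morrey_space \<Phi> \<phi>"
    for \<psi> :: "'a \<Rightarrow> 'a" and L K f
  proof
    have f_measurable: "f \<in> borel_measurable lebesgue" and "orlicz_morrey_norm \<Phi> \<phi> f < \<infinity>"
      using f by (auto simp: orlicz_morrey_space_def)
    have "orlicz_morrey_norm \<Phi> \<phi> (f \<circ> \<psi>) \<le> ennreal (K * L ^ DIM('a) * C * \<phi> L) * orlicz_morrey_norm \<Phi> \<phi> f"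
      using \<psi> by (intro orlicz_morrey_norm_comp_le[OF _ _ _ _ _ assms(1) f_measurable \<phi>_pos submult \<open>0 < C\<close>]) auto
    also have "\<dots> \<le> ennreal (K * (1 + C * \<phi> L * L ^ DIM('a))) * orlicz_morrey_norm \<Phi> \<phi> f"
      using \<open>0 < K\<close> by (intro mult_right_mono ennreal_leI) (simp_all add: algebra_simps)
    finally show bound: "orlicz_morrey_norm \<Phi> \<phi> (f \<circ> \<psi>)
        \<le> ennreal (K * (1 + C * \<phi> L * L ^ DIM('a))) * orlicz_morrey_norm \<Phi> \<phi> f" .
    show "f \<circ> \<psi> \<in> orlicz_morrey_space \<Phi> \<phi>"
      using bound \<open>orlicz_morrey_norm \<Phi> \<phi> f < \<infinity>\<close> measurable_comp[OF \<psi>(1) f_measurable]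
      by (auto simp: orlicz_morrey_space_def ennreal_mult_less_top order.strict_trans1)
  qed
  then show ?thesis
    using \<open>0 < C\<close> by (intro exI[of _ 1] exI[of _ C] conjI) auto
qed

end
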